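(* Let $H$ be a set of pairwise disjoint half-open intervals of $\mathbb{R}$. Let $m_1,\dots,m_I$ be distinct interval-domain monomials with $\mathrm{supp}\,m_i\in H$ for all $i\in[I]$, let $g_1,\dots,g_J$ be distinct Gaussian density functions, and let $e_1,\dots,e_K$ be distinct exponential density functions. Then the set $\{m_1,\dots,m_I,g_1,\dots,g_J,e_1,\dots,e_K\}$ is linearly independent in $\mathcal{L}_1(\mathbb{R},\lambda_{\mathit{Leb}})$.
   Context: An interval-domain monomial is a function $x\mapsto x^k\chi_{[a,b)}(x)$ with $k\in\mathbb{N}\cup\{0\}$ and $a<b$, where $\chi_E$ is the characteristic function of $E$; $\mathrm{supp}\,f=\{x\mid f(x)>0\}$. A Gaussian density function is $x\mapsto\frac{1}{\sigma\sqrt{2\pi}}\exp\left(-\frac{(x-\mu)^2}{2\sigma^2}\right)$ with $\mu\in\mathbb{R}$, $\sigma>0$. An exponential density function is $x\mapsto\lambda e^{-\lambda x}\chi_{[0,\infty)}(x)$ with $\lambda>0$. $\mathcal{L}_1(\mathbb{R},\lambda_{\mathit{Leb}})$ is the space of Lebesgue-integrable functions modulo equality almost everywhere. *)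

theory Defs
  imports "HOL-Probability.Probability"
begin

definition interval_monomial :: "nat \<Rightarrow> real \<Rightarrow> real \<Rightarrow> real \<Rightarrow> real" where
  "interval_monomial k a b x = x ^ k * indicator {a..<b} x"

text \<open>Support as in the paper: the set where the function is strictly positive.\<close>
definition supp :: "(real \<Rightarrow> real) \<Rightarrow> real set" where
  "supp f = {x. f x > 0}"

definition half_open_interval :: "real set \<Rightarrow> bool" where
  "half_open_interval S \<longleftrightarrow> (\<exists>a b. a < b \<and> S = {a..<b})"

end

theory Submission
  imports Defs "HOL-Computational_Algebra.Polynomial" "HOL-Real_Asymp.Real_Asymp"
begin

(* Beyond the right end points of all the intervals only the densities remain. Each of them is a
   positive multiple of exp (A x^2 + B x), with A < 0 for a Gaussian and A = 0 for an exponential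
   density, and distinct densities have distinct exponent pairs (A, B). Dividing by the
   lexicographically largest such exponential with a nonzero coefficient, every other term tends to 0
   at infinity, so that coefficient vanishes after all; hence all coefficients of the densities do.
   What remains is a combination of monomials. On each interval of H it is a polynomial, and the
   monomials supported there have distinct degrees, being distinct functions with equal support.
   All functions involved are continuous on the relevant open sets, so vanishing almost everywhere
   means vanishing everywhere there, and the polynomial is zero. *)

lemma continuous_on_AE_zero_imp_zero:
  fixes f :: "'a::euclidean_space \<Rightarrow> 'b::real_normed_vector"
  assumes "open U" "continuous_on U f" "AE x in lborel. x \<in> U \<longrightarrow> f x = 0"
  shows "\<forall>x\<in>U. f x = 0"
proof -
  let ?V = "U \<inter> f -` (- {0})"
  have "open ?V"
    using assms(1,2) by (intro continuous_open_preimage) auto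
  moreover have "?V \<in> null_sets lborel"
  proof -
    have "{x \<in> space lborel. \<not> (x \<in> U \<longrightarrow> f x = 0)} = ?V"
      by auto
    with assms(3) \<open>open ?V\<close> show ?thesis
      by (metis AE_iff_null borel_open sets_lborel)
  qed
  ultimately have "?V = {}"
    using open_not_negligible negligible_iff_null_sets null_sets_completionI by blast
  then show ?thesis
    by auto
qed

lemma exp_quadratic_tendsto_0:
  fixes A B :: real
  assumes "A < 0 \<or> A = 0 \<and> B < 0"
  shows "((\<lambda>x. exp (A * x\<^sup>2 + B * x)) \<longlongrightarrow> 0) at_top"
  using assms
proof
  assume "A < 0"
  then show ?thesis
    by real_asymp
next
  assume "A = 0 \<and> B < 0"
  then show ?thesis
    by simp real_asymp
qed

lemma obtain_lex_greatest:
  fixes p q :: "'t \<Rightarrow> 'a::linorder"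
  assumes "finite T" "T \<noteq> {}"
  obtains t0 where "t0 \<in> T" "\<forall>t\<in>T. p t < p t0 \<or> p t = p t0 \<and> q t \<le> q t0"
  using assms
proof (induction T arbitrary: thesis rule: finite_ne_induct)
  case (singleton t)
  then show ?case
    by auto
next
  case (insert t T)
  obtain t0 where t0: "t0 \<in> T" "\<forall>s\<in>T. p s < p t0 \<or> p s = p t0 \<and> q s \<le> q t0"
    using insert.IH by blast
  show ?case
  proof (cases "p t0 < p t \<or> p t0 = p t \<and> q t0 \<le> q t")
    case True
    with t0 show ?thesis
      using insert.prems(1)[of t] by force
  next
    case False
    with t0 show ?thesis
      using insert.prems(1)[of t0] by force
  qed
qed

lemma tendsto_exp_quadratic_sum_lex_greatest:
  fixes p q c :: "'t \<Rightarrow> real"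
  assumes "finite T" "inj_on (\<lambda>t. (p t, q t)) T"
    and "t0 \<in> T" "\<forall>t\<in>T. p t < p t0 \<or> p t = p t0 \<and> q t \<le> q t0"
  shows "((\<lambda>x. \<Sum>t\<in>T. c t * exp ((p t - p t0) * x\<^sup>2 + (q t - q t0) * x)) \<longlongrightarrow> c t0) at_top"
proof -
  have "((\<lambda>x. \<Sum>t\<in>T. c t * exp ((p t - p t0) * x\<^sup>2 + (q t - q t0) * x))
          \<longlongrightarrow> (\<Sum>t\<in>T. c t * (if t = t0 then 1 else 0))) at_top"
  proof (intro tendsto_intros)
    fix t assume "t \<in> T"
    show "((\<lambda>x. exp ((p t - p t0) * x\<^sup>2 + (q t - q t0) * x)) \<longlongrightarrow> (if t = t0 then 1 else 0)) at_top"
    proof (cases "t = t0")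
      case False
      with assms(2,3) \<open>t \<in> T\<close> have "(p t, q t) \<noteq> (p t0, q t0)"
        by (auto dest: inj_onD)
      with assms(4) \<open>t \<in> T\<close> have "p t - p t0 < 0 \<or> p t - p t0 = 0 \<and> q t - q t0 < 0"
        by force
      with False show ?thesis
        by (simp add: exp_quadratic_tendsto_0)
    qed simp
  qed
  also have "(\<Sum>t\<in>T. c t * (if t = t0 then 1 else 0)) = c t0"
    using assms(1,3) by (simp add: if_distrib cong: if_cong)
  finally show ?thesis .
qed

lemma exp_quadratic_linear_independent:
  fixes p q c :: "'t \<Rightarrow> real"
  assumes "finite T" "inj_on (\<lambda>t. (p t, q t)) T"
    and "\<forall>\<^sub>F x in at_top. (\<Sum>t\<in>T. c t * exp (p t * x\<^sup>2 + q t * x)) = 0"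
  shows "\<forall>t\<in>T. c t = 0"
proof (rule ccontr)
  assume "\<not> (\<forall>t\<in>T. c t = 0)"
  define T' where "T' = {t\<in>T. c t \<noteq> 0}"
  have "finite T'" "T' \<noteq> {}"
    using assms(1) \<open>\<not> (\<forall>t\<in>T. c t = 0)\<close> by (auto simp: T'_def)
  then obtain t0 where t0: "t0 \<in> T'" and lex: "\<forall>t\<in>T'. p t < p t0 \<or> p t = p t0 \<and> q t \<le> q t0"
    by (rule obtain_lex_greatest)
  define h where "h x = (\<Sum>t\<in>T'. c t * exp ((p t - p t0) * x\<^sup>2 + (q t - q t0) * x))" for x
  have "(h \<longlongrightarrow> c t0) at_top"
    unfolding h_def using \<open>finite T'\<close> inj_on_subset[OF assms(2)] t0 lex
    by (intro tendsto_exp_quadratic_sum_lex_greatest) (auto simp: T'_def)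
  moreover have "h x = exp (- (p t0 * x\<^sup>2 + q t0 * x)) * (\<Sum>t\<in>T. c t * exp (p t * x\<^sup>2 + q t * x))" for x
  proof -
    have "h x = exp (- (p t0 * x\<^sup>2 + q t0 * x)) * (\<Sum>t\<in>T'. c t * exp (p t * x\<^sup>2 + q t * x))"
      by (simp add: h_def sum_distrib_left algebra_simps flip: exp_add)
    also have "(\<Sum>t\<in>T'. c t * exp (p t * x\<^sup>2 + q t * x)) = (\<Sum>t\<in>T. c t * exp (p t * x\<^sup>2 + q t * x))"
      using assms(1) by (auto simp: T'_def sum.inter_filter intro: sum.cong)
    finally show ?thesis .
  qed
  with assms(3) have "(h \<longlongrightarrow> 0) at_top"
    by (auto elim: eventually_mono intro: tendsto_eventually)
  ultimately have "c t0 = 0"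
    by (metis tendsto_unique trivial_limit_at_top_linorder)
  with t0 show False
    by (simp add: T'_def)
qed

lemma normal_density_exp_quadratic:
  "normal_density \<mu> \<sigma> x =
     exp (- \<mu>\<^sup>2 / (2 * \<sigma>\<^sup>2)) / sqrt (2 * pi * \<sigma>\<^sup>2) * exp (- 1 / (2 * \<sigma>\<^sup>2) * x\<^sup>2 + \<mu> / \<sigma>\<^sup>2 * x)"
proof -
  have exponent: "- (x - \<mu>)\<^sup>2 / (2 * \<sigma>\<^sup>2) = - \<mu>\<^sup>2 / (2 * \<sigma>\<^sup>2) + (- 1 / (2 * \<sigma>\<^sup>2) * x\<^sup>2 + \<mu> / \<sigma>\<^sup>2 * x)"
    by (cases "\<sigma> = 0") (simp_all add: power2_eq_square field_simps)
  show ?thesis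
    unfolding normal_density_def exponent exp_add by simp
qed

lemma continuous_on_erlang_density: "continuous_on {0<..} (erlang_density k l)"
proof -
  have "continuous_on {0<..} (\<lambda>x. l ^ Suc k * x ^ k * exp (- l * x) / fact k)"
    by (intro continuous_intros) auto
  then show ?thesis
    by (rule continuous_on_eq) (auto simp: erlang_density_def)
qed

lemma integrable_erlang_density:
  assumes "0 < l"
  shows "integrable lborel (erlang_density k l)"
proof (rule integrableI_nonneg)
  show "(\<integral>\<^sup>+ x. ennreal (erlang_density k l x) \<partial>lborel) < \<infinity>"
    using nn_integral_erlang_ith_moment[OF assms, of k 0] by simp
qed (use assms in auto)

lemma normal_exponential_densities_independent_at_top:
  fixes \<mu> \<sigma> \<beta> :: "'j \<Rightarrow> real" and rate \<gamma> :: "'l \<Rightarrow> real"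
  assumes "finite G" "\<forall>j\<in>G. \<sigma> j > 0" "inj_on (\<lambda>j. (\<mu> j, \<sigma> j)) G"
    and "finite E" "\<forall>l\<in>E. rate l > 0" "inj_on rate E"
    and "\<forall>\<^sub>F x in at_top. (\<Sum>j\<in>G. \<beta> j * normal_density (\<mu> j) (\<sigma> j) x)
                         + (\<Sum>l\<in>E. \<gamma> l * exponential_density (rate l) x) = 0"
  shows "(\<forall>j\<in>G. \<beta> j = 0) \<and> (\<forall>l\<in>E. \<gamma> l = 0)"
proof -
  define C where "C j = exp (- (\<mu> j)\<^sup>2 / (2 * (\<sigma> j)\<^sup>2)) / sqrt (2 * pi * (\<sigma> j)\<^sup>2)" for j
  define p :: "'j + 'l \<Rightarrow> real" where "p = case_sum (\<lambda>j. - 1 / (2 * (\<sigma> j)\<^sup>2)) (\<lambda>l. 0)"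
  define q where "q = case_sum (\<lambda>j. \<mu> j / (\<sigma> j)\<^sup>2) (\<lambda>l. - rate l)"
  define c where "c = case_sum (\<lambda>j. \<beta> j * C j) (\<lambda>l. \<gamma> l * rate l)"
  \<comment> \<open>Gaussians have p < 0 and exponential densities p = 0, so only densities of the same kind can collide.\<close>
  have "inj_on (\<lambda>t. (p t, q t)) (G <+> E)"
  proof (rule inj_onI; elim PlusE; clarify)
    fix j j' assume "j \<in> G" "j' \<in> G" "p (Inl j) = p (Inl j')" "q (Inl j) = q (Inl j')"
    then have "(\<sigma> j)\<^sup>2 = (\<sigma> j')\<^sup>2" "\<mu> j = \<mu> j'"
      using assms(2) by (auto simp: p_def q_def field_simps)
    moreover from this(1) have "\<sigma> j = \<sigma> j'"
      using assms(2) \<open>j \<in> G\<close> \<open>j' \<in> G\<close> by (simp add: less_imp_le)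
    ultimately show "j = j'"
      using assms(3) \<open>j \<in> G\<close> \<open>j' \<in> G\<close> by (auto dest: inj_onD)
  next
    fix l l' assume "l \<in> E" "l' \<in> E" "q (Inr l) = q (Inr l')"
    with assms(6) show "l = l'"
      by (auto simp: q_def dest: inj_onD)
  qed (use assms(2) in \<open>auto simp: p_def\<close>)
  moreover have "\<forall>\<^sub>F x in at_top. (\<Sum>t\<in>G <+> E. c t * exp (p t * x\<^sup>2 + q t * x)) = 0"
    using assms(7) eventually_ge_at_top[of 0]
    by eventually_elim
      (simp add: assms(1,4) sum.Plus p_def q_def c_def C_def normal_density_exp_quadratic exponential_density_def
        mult_ac)
  ultimately have c_0: "\<forall>t\<in>G <+> E. c t = 0"
    using assms(1,4) by (intro exp_quadratic_linear_independent) auto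
  have "\<beta> j = 0" if "j \<in> G" for j
  proof -
    have "C j > 0"
      using assms(2) that by (auto simp: C_def intro!: divide_pos_pos)
    with c_0 that show ?thesis
      by (force simp: c_def)
  qed
  moreover have "\<gamma> l = 0" if "l \<in> E" for l
    using c_0 assms(5) that by (force simp: c_def)
  ultimately show ?thesis
    by blast
qed

lemma normal_exponential_densities_independent_AE:
  fixes \<mu> \<sigma> \<beta> :: "'j \<Rightarrow> real" and rate \<gamma> :: "'l \<Rightarrow> real"
  assumes "finite G" "\<forall>j\<in>G. \<sigma> j > 0" "inj_on (\<lambda>j. (\<mu> j, \<sigma> j)) G"
    and "finite E" "\<forall>l\<in>E. rate l > 0" "inj_on rate E"
    and "AE x in lborel. M < x \<longrightarrow> (\<Sum>j\<in>G. \<beta> j * normal_density (\<mu> j) (\<sigma> j) x)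
                                   + (\<Sum>l\<in>E. \<gamma> l * exponential_density (rate l) x) = 0"
  shows "(\<forall>j\<in>G. \<beta> j = 0) \<and> (\<forall>l\<in>E. \<gamma> l = 0)"
proof (rule normal_exponential_densities_independent_at_top[OF assms(1-6)])
  \<comment> \<open>Exponential densities jump at 0.\<close>
  define M' where "M' = max M 0"
  let ?F = "\<lambda>x. (\<Sum>j\<in>G. \<beta> j * normal_density (\<mu> j) (\<sigma> j) x)
                + (\<Sum>l\<in>E. \<gamma> l * exponential_density (rate l) x)"
  have "continuous_on {M'<..} (normal_density (\<mu> j) (\<sigma> j))" if "j \<in> G" for j
    using assms(2) that by (auto simp: normal_density_def intro!: continuous_intros)
  moreover have "continuous_on {M'<..} (exponential_density r)" for r
    using continuous_on_erlang_density by (rule continuous_on_subset) (auto simp: M'_def)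
  ultimately have "continuous_on {M'<..} ?F"
    by (intro continuous_on_add continuous_on_sum continuous_on_mult_left) auto
  moreover have "AE x in lborel. x \<in> {M'<..} \<longrightarrow> ?F x = 0"
    using assms(7) by eventually_elim (simp add: M'_def)
  ultimately have F_0: "\<forall>x\<in>{M'<..}. ?F x = 0"
    by (rule continuous_on_AE_zero_imp_zero[OF open_greaterThan])
  show "\<forall>\<^sub>F x in at_top. ?F x = 0"
    using eventually_gt_at_top[of M'] by (rule eventually_mono) (use F_0 in simp)
qed

lemma sum_monomials_zero_imp_coeffs_zero:
  fixes \<alpha> :: "'i \<Rightarrow> 'a::idom" and k :: "'i \<Rightarrow> nat"
  assumes "finite S" "inj_on k S" "infinite Z" "\<forall>x\<in>Z. (\<Sum>i\<in>S. \<alpha> i * x ^ k i) = 0"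
  shows "\<forall>i\<in>S. \<alpha> i = 0"
proof
  fix i0 assume "i0 \<in> S"
  define P where "P = (\<Sum>i\<in>S. monom (\<alpha> i) (k i))"
  have "Z \<subseteq> {x. poly P x = 0}"
    using assms(4) by (auto simp: P_def poly_sum poly_monom)
  with assms(3) have "P = 0"
    using poly_roots_finite finite_subset by blast
  have "coeff P (k i0) = (\<Sum>i\<in>S. if i = i0 then \<alpha> i else 0)"
    unfolding P_def coeff_sum coeff_monom
    using assms(2) \<open>i0 \<in> S\<close> by (intro sum.cong) (auto dest: inj_onD)
  with \<open>P = 0\<close> \<open>i0 \<in> S\<close> assms(1) show "\<alpha> i0 = 0"
    by simp
qed

lemma interval_monomial_eq_indicator_supp:
  assumes "half_open_interval (supp (interval_monomial k a b))"
  shows "interval_monomial k a b x = x ^ k * indicator (supp (interval_monomial k a b)) x"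
proof -
  let ?m = "interval_monomial k a b"
  obtain c d where "c < d" and supp_eq: "supp ?m = {c..<d}"
    using assms by (auto simp: half_open_interval_def)
  \<comment> \<open>A negative value forces k odd and x < 0; then c > 0, and c / 2 would lie in the support.\<close>
  have "?m x \<ge> 0"
  proof (rule ccontr)
    assume "\<not> ?m x \<ge> 0"
    then have "x \<in> {a..<b}" "odd k" "x < 0"
      by (auto simp: interval_monomial_def not_le split: split_indicator_asm)
    have "c \<in> supp ?m"
      using \<open>c < d\<close> supp_eq by simp
    then have "c \<in> {a..<b}" "c ^ k > 0"
      by (auto simp: supp_def interval_monomial_def split: split_indicator_asm)
    with \<open>odd k\<close> have "c > 0"
      by (auto simp: zero_less_power_eq)
    with \<open>x \<in> {a..<b}\<close> \<open>c \<in> {a..<b}\<close> \<open>x < 0\<close> have "c / 2 \<in> supp ?m"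
      by (auto simp: supp_def interval_monomial_def)
    with supp_eq \<open>c > 0\<close> show False
      by simp
  qed
  then show ?thesis
    by (auto simp: supp_def interval_monomial_def split: split_indicator split_indicator_asm)
qed

lemma integrable_interval_monomial: "integrable lborel (interval_monomial k a b)"
proof -
  have "interval_monomial k a b = (\<lambda>x. indicator {a..<b} x *\<^sub>R (indicator {a..b} x *\<^sub>R x ^ k))"
    by (auto simp: fun_eq_iff interval_monomial_def split: split_indicator)
  moreover have "integrable lborel (\<lambda>x. indicator {a..<b} x *\<^sub>R (indicator {a..b} x *\<^sub>R x ^ k))"
    by (intro integrable_mult_indicator borel_integrable_compact continuous_intros) auto
  ultimately show ?thesis
    by simp
qed

lemma eventually_sum_interval_monomials_eq_0:
  fixes k :: "'i \<Rightarrow> nat" and a b \<alpha> :: "'i \<Rightarrow> real"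
  assumes "finite N"
  shows "\<forall>\<^sub>F x in at_top. (\<Sum>i\<in>N. \<alpha> i * interval_monomial (k i) (a i) (b i) x) = 0"
proof -
  have "\<forall>\<^sub>F x in at_top. \<forall>i\<in>N. b i \<le> x"
    using assms by (simp add: eventually_ball_finite)
  then show ?thesis
  proof eventually_elim
    case (elim x)
    have "interval_monomial (k i) (a i) (b i) x = 0" if "i \<in> N" for i
      using elim that by (auto simp: interval_monomial_def indicator_def)
    then show ?case
      by (simp add: sum.neutral)
  qed
qed

lemma interval_monomials_independent:
  fixes H :: "real set set" and k :: "'i \<Rightarrow> nat" and a b \<alpha> :: "'i \<Rightarrow> real"
  defines "m \<equiv> \<lambda>i. interval_monomial (k i) (a i) (b i)"
  assumes "\<forall>S\<in>H. half_open_interval S" "disjoint H"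
    and "finite N" "\<forall>i\<in>N. supp (m i) \<in> H" "inj_on m N"
    and "AE x in lborel. (\<Sum>i\<in>N. \<alpha> i * m i x) = 0"
  shows "\<forall>i\<in>N. \<alpha> i = 0"
proof
  fix i0 assume "i0 \<in> N"
  have m_eq: "m i = (\<lambda>x. x ^ k i * indicator (supp (m i)) x)" if "i \<in> N" for i
    using assms(2,5) that by (auto simp: m_def intro!: interval_monomial_eq_indicator_supp)
  obtain c d where "c < d" and supp_i0: "supp (m i0) = {c..<d}"
    using assms(2,5) \<open>i0 \<in> N\<close> by (force simp: half_open_interval_def)
  define S where "S = {i\<in>N. supp (m i) = supp (m i0)}"
  have "inj_on k S"
  proof (rule inj_onI)
    fix i j assume "i \<in> S" "j \<in> S" "k i = k j"
    then have "m i = m j"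
      using m_eq[of i] m_eq[of j] by (simp add: S_def)
    with assms(6) \<open>i \<in> S\<close> \<open>j \<in> S\<close> show "i = j"
      by (auto simp: S_def dest: inj_onD)
  qed
  have sum_eq: "(\<Sum>i\<in>N. \<alpha> i * m i x) = (\<Sum>i\<in>S. \<alpha> i * x ^ k i)" if "x \<in> {c<..<d}" for x
  proof -
    have "m i x = (if supp (m i) = supp (m i0) then x ^ k i else 0)" if "i \<in> N" for i
    proof -
      have "supp (m i) = supp (m i0) \<or> supp (m i) \<inter> supp (m i0) = {}"
        using assms(3,5) \<open>i \<in> N\<close> \<open>i0 \<in> N\<close> by (meson disjointD)
      moreover have "x \<in> supp (m i0)"
        using \<open>x \<in> {c<..<d}\<close> supp_i0 by simp
      ultimately show ?thesis
        by (subst m_eq[OF \<open>i \<in> N\<close>]) (auto split: split_indicator)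
    qed
    then show ?thesis
      using assms(4) by (auto simp: S_def sum.inter_filter intro: sum.cong)
  qed
  have "\<forall>x\<in>{c<..<d}. (\<Sum>i\<in>S. \<alpha> i * x ^ k i) = 0"
  proof (rule continuous_on_AE_zero_imp_zero)
    show "AE x in lborel. x \<in> {c<..<d} \<longrightarrow> (\<Sum>i\<in>S. \<alpha> i * x ^ k i) = 0"
      using assms(7) by eventually_elim (auto simp flip: sum_eq)
  qed (simp, intro continuous_intros)
  then show "\<alpha> i0 = 0"
    using sum_monomials_zero_imp_coeffs_zero[of S k "{c<..<d}" \<alpha>] assms(4) \<open>inj_on k S\<close> \<open>c < d\<close> \<open>i0 \<in> N\<close>
    by (simp add: S_def)
qed

theorem lemma14:
  fixes H :: "real set set"
    and I J K :: nat
    and k :: "nat \<Rightarrow> nat" and a b :: "nat \<Rightarrow> real"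
    and \<mu> \<sigma> :: "nat \<Rightarrow> real"
    and rate :: "nat \<Rightarrow> real"
  defines "m \<equiv> (\<lambda>i. interval_monomial (k i) (a i) (b i))"
      and "g \<equiv> (\<lambda>j. normal_density (\<mu> j) (\<sigma> j))"
      and "e \<equiv> (\<lambda>l. exponential_density (rate l))"
  assumes H_intervals: "\<forall>S\<in>H. half_open_interval S"
      and H_disjoint: "disjoint H"
      and ab: "\<forall>i<I. a i < b i"
      and m_supp: "\<forall>i<I. supp (m i) \<in> H"
      and m_distinct: "inj_on m {..<I}"
      and \<sigma>_pos: "\<forall>j<J. \<sigma> j > 0"
      and g_distinct: "inj_on g {..<J}"
      and rate_pos: "\<forall>l<K. rate l > 0"
      and e_distinct: "inj_on e {..<K}"
  shows "(\<forall>i<I. integrable lborel (m i)) \<and> (\<forall>j<J. integrable lborel (g j))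
           \<and> (\<forall>l<K. integrable lborel (e l))
         \<and> (\<forall>(\<alpha>::nat \<Rightarrow> real) (\<beta>::nat \<Rightarrow> real) (\<gamma>::nat \<Rightarrow> real).
              (AE x in lborel. (\<Sum>i<I. \<alpha> i * m i x) + (\<Sum>j<J. \<beta> j * g j x)
                                + (\<Sum>l<K. \<gamma> l * e l x) = 0)
              \<longrightarrow> (\<forall>i<I. \<alpha> i = 0) \<and> (\<forall>j<J. \<beta> j = 0) \<and> (\<forall>l<K. \<gamma> l = 0))"
proof -
  have "(\<forall>i<I. \<alpha> i = 0) \<and> (\<forall>j<J. \<beta> j = 0) \<and> (\<forall>l<K. \<gamma> l = 0)"
    if ae: "AE x in lborel. (\<Sum>i<I. \<alpha> i * m i x) + (\<Sum>j<J. \<beta> j * g j x) + (\<Sum>l<K. \<gamma> l * e l x) = 0"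
    for \<alpha> \<beta> \<gamma> :: "nat \<Rightarrow> real"
  proof -
    obtain M where M: "\<forall>x\<ge>M. (\<Sum>i<I. \<alpha> i * m i x) = 0"
      using eventually_sum_interval_monomials_eq_0[of "{..<I}" \<alpha> k a b]
      unfolding m_def eventually_at_top_linorder by auto
    have "AE x in lborel. M < x \<longrightarrow> (\<Sum>j<J. \<beta> j * g j x) + (\<Sum>l<K. \<gamma> l * e l x) = 0"
      using ae by eventually_elim (auto simp: M)
    moreover have "inj_on (\<lambda>j. (\<mu> j, \<sigma> j)) {..<J}"
      using g_distinct by (intro inj_on_imageI2[of "case_prod normal_density"]) (simp add: g_def o_def)
    moreover have "inj_on rate {..<K}"
      using e_distinct by (intro inj_on_imageI2[of exponential_density]) (simp add: e_def o_def)
    ultimately have \<beta>\<gamma>: "(\<forall>j\<in>{..<J}. \<beta> j = 0) \<and> (\<forall>l\<in>{..<K}. \<gamma> l = 0)"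
      using \<sigma>_pos rate_pos unfolding g_def e_def
      by (intro normal_exponential_densities_independent_AE[of _ _ _ _ _ M]) auto
    with ae have "AE x in lborel. (\<Sum>i<I. \<alpha> i * m i x) = 0"
      by simp
    then have "\<forall>i\<in>{..<I}. \<alpha> i = 0"
      using H_intervals H_disjoint m_supp m_distinct unfolding m_def
      by (intro interval_monomials_independent) auto
    with \<beta>\<gamma> show ?thesis
      by simp
  qed
  then show ?thesis
    using integrable_interval_monomial integrable_normal_density \<sigma>_pos integrable_erlang_density rate_pos
    by (simp add: m_def g_def e_def)
qed

end
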